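(* For every non-constant Boolean function $f:\{0,1\}^n\to\{0,1\}$ and every $0<\epsilon<1$, $M_\epsilon(f)\ge\frac12\deg_\pm(f)$.
   Context: $\mathsf N_\epsilon(f)$ is the minimum degree of a real polynomial $p$ with $|p(x)|\le\epsilon$ whenever $f(x)=0$ and $|p(x)|\ge1$ whenever $f(x)=1$; $\overline f=1-f$; $M_\epsilon(f)=\max\{\mathsf N_\epsilon(f),\mathsf N_\epsilon(\overline f)\}$. The sign degree $\deg_\pm(f)$ is the minimum degree of a real polynomial $p$ such that for all $x\in\{0,1\}^n$, $p(x)<0$ iff $f(x)=1$. *)

theory Defs
  imports Main "HOL.Complex_Main"
begin

text \<open>Points of the Boolean cube {0,1}^n: maps nat => bool that are False (=0) outside {..<n}.\<close>
definition cube :: "nat \<Rightarrow> (nat \<Rightarrow> bool) set" where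
  "cube n = {x. \<forall>i\<ge>n. \<not> x i}"

text \<open>p (restricted to the cube) is a real polynomial of degree at most d in x_0..x_{n-1}.
  On {0,1}^n every real polynomial of degree <= d coincides with a multilinear one of degree <= d.\<close>
definition poly_deg_le :: "nat \<Rightarrow> nat \<Rightarrow> ((nat \<Rightarrow> bool) \<Rightarrow> real) \<Rightarrow> bool" where
  "poly_deg_le n d p \<longleftrightarrow>
     (\<exists>c :: nat set \<Rightarrow> real. \<forall>x\<in>cube n.
        p x = (\<Sum>S\<in>{S. S \<subseteq> {..<n} \<and> card S \<le> d}. c S * (\<Prod>i\<in>S. (if x i then 1 else 0))))"

text \<open>N_eps(f); f x = True means f(x)=1.\<close>
definition N_eps :: "nat \<Rightarrow> real \<Rightarrow> ((nat \<Rightarrow> bool) \<Rightarrow> bool) \<Rightarrow> nat" where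
  "N_eps n \<epsilon> f = (LEAST d. \<exists>p. poly_deg_le n d p \<and>
      (\<forall>x\<in>cube n. \<not> f x \<longrightarrow> \<bar>p x\<bar> \<le> \<epsilon>) \<and>
      (\<forall>x\<in>cube n. f x \<longrightarrow> \<bar>p x\<bar> \<ge> 1))"

definition M_eps :: "nat \<Rightarrow> real \<Rightarrow> ((nat \<Rightarrow> bool) \<Rightarrow> bool) \<Rightarrow> nat" where
  "M_eps n \<epsilon> f = max (N_eps n \<epsilon> f) (N_eps n \<epsilon> (\<lambda>x. \<not> f x))"

definition sign_deg :: "nat \<Rightarrow> ((nat \<Rightarrow> bool) \<Rightarrow> bool) \<Rightarrow> nat" where
  "sign_deg n f = (LEAST d. \<exists>p. poly_deg_le n d p \<and> (\<forall>x\<in>cube n. p x < 0 \<longleftrightarrow> f x))"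

end

theory Submission
  imports Defs
begin

(* Square a polynomial p that witnesses N_eps(f) = d: the polynomial eps - p^2 has degree 2d and
   is negative exactly where |p| >= 1, i.e. exactly on f^-1(1), because |p| <= eps < 1 elsewhere. *)

definition monomial :: "nat set \<Rightarrow> (nat \<Rightarrow> bool) \<Rightarrow> real" where
  "monomial S x = (\<Prod>i\<in>S. if x i then 1 else 0)"

lemma monomial_eq: "finite S \<Longrightarrow> monomial S x = (if \<forall>i\<in>S. x i then 1 else 0)"
  unfolding monomial_def by (auto intro: prod.neutral)

lemma monomial_Un: "finite S \<Longrightarrow> finite T \<Longrightarrow> monomial (S \<union> T) x = monomial S x * monomial T x"
  by (auto simp: monomial_eq)

lemma poly_deg_le_iff_monomials: "poly_deg_le n d p \<longleftrightarrow>
   (\<exists>c. \<forall>x\<in>cube n. p x = (\<Sum>S\<in>{S. S \<subseteq> {..<n} \<and> card S \<le> d}. c S * monomial S x))"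
  unfolding poly_deg_le_def monomial_def by simp

lemma finite_low_card_subsets: "finite {S. S \<subseteq> {..<(n::nat)} \<and> card S \<le> d}"
  by (rule finite_subset[of _ "Pow {..<n}"]) auto

lemma cube_finite: "finite (cube n)"
proof (rule finite_subset)
  show "cube n \<subseteq> (\<lambda>S i. i \<in> S) ` Pow {..<n}"
  proof
    fix x assume "x \<in> cube n"
    then have "{i. x i} \<in> Pow {..<n}" unfolding cube_def by (auto simp: not_le[symmetric])
    moreover have "x = (\<lambda>i. i \<in> {i. x i})" by auto
    ultimately show "x \<in> (\<lambda>S i. i \<in> S) ` Pow {..<n}" by blast
  qed
qed simp

lemma poly_deg_le_monomial_sum:
  assumes K: "finite K" and M: "\<And>k. k \<in> K \<Longrightarrow> finite (M k) \<and> card (M k) \<le> d"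
    and p: "\<And>x. x \<in> cube n \<Longrightarrow> p x = (\<Sum>k\<in>K. c k * monomial (M k) x)"
  shows "poly_deg_le n d p"
proof -
  define C where "C = {S. S \<subseteq> {..<n} \<and> card S \<le> d}"
  define K' where "K' = {k\<in>K. M k \<subseteq> {..<n}}"
  define c' where "c' S = (\<Sum>k\<in>{k\<in>K'. M k = S}. c k)" for S
  have "finite K'" using K unfolding K'_def by auto
  show ?thesis unfolding poly_deg_le_iff_monomials C_def[symmetric]
  proof (intro exI[of _ c'] ballI)
    fix x assume x: "x \<in> cube n"
    have vanish: "c k * monomial (M k) x = 0" if k: "k \<in> K - K'" for k
    proof -
      obtain i where "i \<in> M k" "i \<ge> n" using k unfolding K'_def by (auto simp: subset_iff not_less)
      moreover have "\<not> x i" using x \<open>i \<ge> n\<close> unfolding cube_def by auto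
      ultimately show ?thesis using M[of k] k by (auto simp: monomial_eq)
    qed
    have "p x = (\<Sum>k\<in>K'. c k * monomial (M k) x)"
      unfolding p[OF x] by (rule sum.mono_neutral_right[OF K]) (use vanish in \<open>auto simp: K'_def\<close>)
    also have "\<dots> = (\<Sum>S\<in>C. \<Sum>k\<in>{k\<in>K'. M k = S}. c k * monomial (M k) x)"
      by (rule sum.group[symmetric, OF \<open>finite K'\<close> finite_low_card_subsets[of n d, folded C_def]])
         (use M in \<open>auto simp: C_def K'_def\<close>)
    also have "\<dots> = (\<Sum>S\<in>C. c' S * monomial S x)"
      unfolding c'_def sum_distrib_right by (rule sum.cong) auto
    finally show "p x = (\<Sum>S\<in>C. c' S * monomial S x)" .
  qed
qed

lemma poly_deg_le_const: "poly_deg_le n d (\<lambda>x. a)"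
  by (rule poly_deg_le_monomial_sum[where K="{()}" and M="\<lambda>_. {}" and c="\<lambda>_. a"])
     (auto simp: monomial_def)

lemma poly_deg_le_var: "i < n \<Longrightarrow> poly_deg_le n 1 (\<lambda>x. if x i then 1 else 0)"
  by (rule poly_deg_le_monomial_sum[where K="{()}" and M="\<lambda>_. {i}" and c="\<lambda>_. 1"])
     (auto simp: monomial_def)

lemma poly_deg_le_add:
  assumes "poly_deg_le n d p" "poly_deg_le n d q"
  shows "poly_deg_le n d (\<lambda>x. p x + q x)"
proof -
  obtain c1 c2 where
    "\<forall>x\<in>cube n. p x = (\<Sum>S\<in>{S. S \<subseteq> {..<n} \<and> card S \<le> d}. c1 S * monomial S x)"
    "\<forall>x\<in>cube n. q x = (\<Sum>S\<in>{S. S \<subseteq> {..<n} \<and> card S \<le> d}. c2 S * monomial S x)"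
    using assms unfolding poly_deg_le_iff_monomials by blast
  then show ?thesis unfolding poly_deg_le_iff_monomials
    by (intro exI[of _ "\<lambda>S. c1 S + c2 S"]) (simp add: distrib_right sum.distrib)
qed

lemma poly_deg_le_mult:
  assumes "poly_deg_le n d p" "poly_deg_le n e q"
  shows "poly_deg_le n (d + e) (\<lambda>x. p x * q x)"
proof -
  let ?A = "{S. S \<subseteq> {..<n} \<and> card S \<le> d}"
  let ?B = "{S. S \<subseteq> {..<n} \<and> card S \<le> e}"
  obtain c1 c2 where c1: "\<forall>x\<in>cube n. p x = (\<Sum>S\<in>?A. c1 S * monomial S x)"
    and c2: "\<forall>x\<in>cube n. q x = (\<Sum>T\<in>?B. c2 T * monomial T x)"
    using assms unfolding poly_deg_le_iff_monomials by blast
  show ?thesis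
  proof (rule poly_deg_le_monomial_sum[where K="?A \<times> ?B" and M="\<lambda>(S, T). S \<union> T"
        and c="\<lambda>(S, T). c1 S * c2 T"])
    show "finite (?A \<times> ?B)" using finite_low_card_subsets by blast
  next
    fix k assume "k \<in> ?A \<times> ?B"
    then show "finite (case k of (S, T) \<Rightarrow> S \<union> T) \<and> card (case k of (S, T) \<Rightarrow> S \<union> T) \<le> d + e"
      by (auto intro: finite_subset card_Un_le[THEN order_trans])
  next
    fix x assume x: "x \<in> cube n"
    have term_eq: "c1 S * monomial S x * (c2 T * monomial T x) = c1 S * c2 T * monomial (S \<union> T) x"
      if "(S, T) \<in> ?A \<times> ?B" for S T
    proof -
      have "finite S" "finite T" using that by (auto intro: finite_subset)
      then show ?thesis by (simp add: monomial_Un)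
    qed
    have "p x * q x = (\<Sum>(S, T)\<in>?A \<times> ?B. c1 S * monomial S x * (c2 T * monomial T x))"
      using c1 c2 x by (simp add: sum_product sum.cartesian_product)
    also have "\<dots> = (\<Sum>(S, T)\<in>?A \<times> ?B. c1 S * c2 T * monomial (S \<union> T) x)"
      by (rule sum.cong) (auto simp: term_eq)
    finally show "p x * q x = (\<Sum>k\<in>?A \<times> ?B.
        (case k of (S, T) \<Rightarrow> c1 S * c2 T) * monomial (case k of (S, T) \<Rightarrow> S \<union> T) x)"
      by (simp add: case_prod_beta)
  qed
qed

lemma poly_deg_le_sum:
  "finite A \<Longrightarrow> (\<And>a. a \<in> A \<Longrightarrow> poly_deg_le n d (g a)) \<Longrightarrow> poly_deg_le n d (\<lambda>x. \<Sum>a\<in>A. g a x)"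
proof (induction A rule: finite_induct)
  case empty
  then show ?case using poly_deg_le_const[of n d 0] by simp
next
  case (insert a A)
  then show ?case using poly_deg_le_add[of n d "g a" "\<lambda>x. \<Sum>a\<in>A. g a x"] by simp
qed

lemma poly_deg_le_prod:
  "finite I \<Longrightarrow> (\<And>i. i \<in> I \<Longrightarrow> poly_deg_le n 1 (g i)) \<Longrightarrow> poly_deg_le n (card I) (\<lambda>x. \<Prod>i\<in>I. g i x)"
proof (induction I rule: finite_induct)
  case empty
  then show ?case using poly_deg_le_const[of n 0 1] by simp
next
  case (insert i I)
  then show ?case using poly_deg_le_mult[of n 1 "g i" "card I" "\<lambda>x. \<Prod>i\<in>I. g i x"] by simp
qed

definition cube_delta :: "nat \<Rightarrow> (nat \<Rightarrow> bool) \<Rightarrow> (nat \<Rightarrow> bool) \<Rightarrow> real" where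
  "cube_delta n a x = (\<Prod>i<n. if a i = x i then 1 else 0)"

lemma cube_delta_eq:
  assumes "a \<in> cube n" "x \<in> cube n"
  shows "cube_delta n a x = (if a = x then 1 else 0)"
proof (cases "a = x")
  case True
  then show ?thesis unfolding cube_delta_def by simp
next
  case False
  then obtain i where "a i \<noteq> x i" by auto
  moreover from this have "i < n" using assms unfolding cube_def by (metis not_le mem_Collect_eq)
  ultimately show ?thesis unfolding cube_delta_def using False
    by (intro trans[OF prod_zero]) (auto intro: bexI[of _ i])
qed

lemma poly_deg_le_cube_delta: "poly_deg_le n n (cube_delta n a)"
proof -
  have factor: "poly_deg_le n 1 (\<lambda>x. if a i = x i then 1 else 0)" if "i < n" for i
  proof (cases "a i")
    case True
    then show ?thesis using poly_deg_le_var[OF that] by simp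
  next
    case False
    have "(\<lambda>x. if a i = x i then 1 else 0) = (\<lambda>x. 1 + (if x i then 1 else 0) * (-1::real))"
      using False by auto
    then show ?thesis
      using poly_deg_le_add[OF poly_deg_le_const poly_deg_le_mult[OF poly_deg_le_var[OF that]
            poly_deg_le_const, of 0 "-1"]] by simp
  qed
  show ?thesis
    using poly_deg_le_prod[of "{..<n}" n "\<lambda>i x. if a i = x i then 1 else 0"] factor
    unfolding cube_delta_def[abs_def] by simp
qed

text \<open>Every function on the cube is the sum of its values times the point indicators.\<close>

lemma poly_deg_le_dim: "poly_deg_le n n g"
proof -
  have "g x = (\<Sum>a\<in>cube n. g a * cube_delta n a x)" if "x \<in> cube n" for x
    using that cube_finite by (simp add: cube_delta_eq if_distrib cong: if_cong)
  moreover have "poly_deg_le n n (\<lambda>x. \<Sum>a\<in>cube n. g a * cube_delta n a x)"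
    by (intro poly_deg_le_sum cube_finite poly_deg_le_mult[of n 0 _ n, simplified]
        poly_deg_le_const poly_deg_le_cube_delta)
  ultimately show ?thesis
    unfolding poly_deg_le_iff_monomials by simp
qed

lemma N_eps_attained:
  assumes "0 \<le> \<epsilon>"
  obtains p where "poly_deg_le n (N_eps n \<epsilon> f) p"
    and "\<And>x. x \<in> cube n \<Longrightarrow> \<not> f x \<Longrightarrow> \<bar>p x\<bar> \<le> \<epsilon>"
    and "\<And>x. x \<in> cube n \<Longrightarrow> f x \<Longrightarrow> \<bar>p x\<bar> \<ge> 1"
proof -
  let ?approx = "\<lambda>d. \<exists>p. poly_deg_le n d p \<and>
      (\<forall>x\<in>cube n. \<not> f x \<longrightarrow> \<bar>p x\<bar> \<le> \<epsilon>) \<and> (\<forall>x\<in>cube n. f x \<longrightarrow> \<bar>p x\<bar> \<ge> 1)"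
  have "?approx n"
    using assms poly_deg_le_dim[of n "\<lambda>x. if f x then 1 else 0"] by auto
  then have "?approx (N_eps n \<epsilon> f)"
    unfolding N_eps_def by (rule LeastI)
  then show ?thesis using that by blast
qed

lemma sign_deg_le:
  assumes "poly_deg_le n d p" "\<And>x. x \<in> cube n \<Longrightarrow> p x < 0 \<longleftrightarrow> f x"
  shows "sign_deg n f \<le> d"
  unfolding sign_deg_def by (rule Least_le) (use assms in blast)

lemma sign_deg_le_twice_N_eps:
  assumes "0 \<le> \<epsilon>" "\<epsilon> < 1"
  shows "sign_deg n f \<le> 2 * N_eps n \<epsilon> f"
proof -
  obtain p where deg: "poly_deg_le n (N_eps n \<epsilon> f) p"
    and small: "\<And>x. x \<in> cube n \<Longrightarrow> \<not> f x \<Longrightarrow> \<bar>p x\<bar> \<le> \<epsilon>"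
    and large: "\<And>x. x \<in> cube n \<Longrightarrow> f x \<Longrightarrow> \<bar>p x\<bar> \<ge> 1"
    using N_eps_attained[OF assms(1)] by blast
  define q where "q x = \<epsilon> + p x * p x * (-1)" for x
  have "poly_deg_le n (N_eps n \<epsilon> f + N_eps n \<epsilon> f + 0) q"
    unfolding q_def[abs_def]
    by (intro poly_deg_le_add poly_deg_le_const poly_deg_le_mult deg)
  moreover have "q x < 0 \<longleftrightarrow> f x" if x: "x \<in> cube n" for x
  proof (cases "f x")
    case True
    have "1 * 1 \<le> \<bar>p x\<bar> * \<bar>p x\<bar>" using large[OF x True] by (intro mult_mono) auto
    then show ?thesis using True assms(2) by (simp add: q_def abs_mult_self)
  next
    case False
    have "\<bar>p x\<bar> * \<bar>p x\<bar> \<le> \<epsilon> * 1" using small[OF x False] assms by (intro mult_mono) auto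
    then show ?thesis using False by (simp add: q_def abs_mult_self)
  qed
  ultimately show ?thesis by (simp add: sign_deg_le mult_2)
qed

theorem fact3p1:
  fixes n :: nat and f :: "(nat \<Rightarrow> bool) \<Rightarrow> bool" and \<epsilon> :: real
  assumes "\<exists>x\<in>cube n. \<exists>y\<in>cube n. f x \<noteq> f y"
    and "0 < \<epsilon>" and "\<epsilon> < 1"
  shows "real (M_eps n \<epsilon> f) \<ge> real (sign_deg n f) / 2"
proof -
  have "sign_deg n f \<le> 2 * N_eps n \<epsilon> f"
    using assms(2,3) by (intro sign_deg_le_twice_N_eps) auto
  moreover have "N_eps n \<epsilon> f \<le> M_eps n \<epsilon> f"
    unfolding M_eps_def by simp
  ultimately show ?thesis by simp
qed

end
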